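(* Fix $\gamma\in\mathbb{R}$ and $\alpha\in\mathbb{R}$, and set $\beta=\alpha$. Let $\bm{u}_\gamma=(\sin\gamma,0,\cos\gamma)$ and $\hat{\bm z}=(0,0,1)$. For a unit vector $\bm u$ and angle $\theta$ let $\bm q(\bm u,\theta)=\{\cos(\theta/2),\ \sin(\theta/2)\,\bm u\}$ denote the unit quaternion representing rotation by $\theta$ about $\bm u$, and define the quaternions (Hamilton product) \[ \bm Q^{(1)}=\bm q(\bm u_\gamma,\beta)\,\bm q(\hat{\bm z},\alpha),\qquad \bm Q^{(4)}=\bm q(\bm u_\gamma,\beta+\pi)\,\bm q(\hat{\bm z},\alpha+\pi), \] (representing the rotations $R_1=R^{\bm u_\gamma}_\beta R^z_\alpha$ and $R_4=R^{\bm u_\gamma}_{\beta+\pi}R^z_{\alpha+\pi}$). For an integer $j\ge 1$ let $\bm q^{(j)}=(\bm Q^{(1)})^j\bm Q^{(4)}=\{q^{(j)}_1,q^{(j)}_2,q^{(j)}_3,q^{(j)}_4\}$ and define $\theta_{41^j}(\alpha,\gamma)=2\arccos q^{(j)}_1$. Then for every $j\ge 1$, if \[ \cos\left(\frac{\gamma}{2}\right)\sin\left(\frac{\alpha}{2}\right)=\sin\left(\frac{\pi}{2(2j+1)}\right)=\cos\left(\frac{j\pi}{2j+1}\right), \] then $\theta_{41^j}(\alpha,\gamma)=\dfrac{2j\pi}{2j+1}$.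
   Context: Setting: a piecewise isometry on the lower unit hemispherical shell obtained by rotating by $\alpha$ about the horizontal $z$-axis and then by $\beta$ about a second horizontal axis $\bm u_\gamma$ making angle $\gamma$ with the first, with points crossing the equator rotated by an extra $\pi$. On atom $P_1$ the map acts as the rotation $R_1$ and on atom $P_4$ as $R_4$; the itinerary $41^j$ (one visit to $P_4$ followed by $j$ visits to $P_1$) produces the net rotation $R_1^j R_4$ (rightmost applied first), whose quaternion is $\bm q^{(j)}$, and $\theta_{41^j}$ is the corresponding internal rotation angle of the cell with that itinerary. $R^{\bm a}_\theta$ denotes rotation by $\theta$ about axis $\bm a$. *)

theory Defs
  imports "HOL-Analysis.Analysis"
begin

text \<open>Quaternions represented as 4-tuples (scalar part, vector part x, y, z).\<close>
type_synonym quat = "real \<times> real \<times> real \<times> real"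

definition qmul :: "quat \<Rightarrow> quat \<Rightarrow> quat" where
  "qmul p q = (case p of (a1, b1, c1, d1) \<Rightarrow> case q of (a2, b2, c2, d2) \<Rightarrow>
     (a1*a2 - b1*b2 - c1*c2 - d1*d2,
      a1*b2 + b1*a2 + c1*d2 - d1*c2,
      a1*c2 - b1*d2 + c1*a2 + d1*b2,
      a1*d2 + b1*c2 - c1*b2 + d1*a2))"

definition qone :: quat where "qone = (1, 0, 0, 0)"

fun qpow :: "quat \<Rightarrow> nat \<Rightarrow> quat" where
  "qpow q 0 = qone"
| "qpow q (Suc n) = qmul q (qpow q n)"

definition rotq :: "real \<times> real \<times> real \<Rightarrow> real \<Rightarrow> quat" where
  "rotq u \<theta> = (case u of (u1, u2, u3) \<Rightarrow>
     (cos (\<theta>/2), sin (\<theta>/2) * u1, sin (\<theta>/2) * u2, sin (\<theta>/2) * u3))"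

definition u_gamma :: "real \<Rightarrow> real \<times> real \<times> real" where
  "u_gamma \<gamma> = (sin \<gamma>, 0, cos \<gamma>)"

definition z_hat :: "real \<times> real \<times> real" where
  "z_hat = (0, 0, 1)"

definition Q1 :: "real \<Rightarrow> real \<Rightarrow> real \<Rightarrow> quat" where
  "Q1 \<alpha> \<beta> \<gamma> = qmul (rotq (u_gamma \<gamma>) \<beta>) (rotq z_hat \<alpha>)"

definition Q4 :: "real \<Rightarrow> real \<Rightarrow> real \<Rightarrow> quat" where
  "Q4 \<alpha> \<beta> \<gamma> = qmul (rotq (u_gamma \<gamma>) (\<beta> + pi)) (rotq z_hat (\<alpha> + pi))"

definition q_itin :: "nat \<Rightarrow> real \<Rightarrow> real \<Rightarrow> quat" where
  "q_itin j \<alpha> \<gamma> = qmul (qpow (Q1 \<alpha> \<alpha> \<gamma>) j) (Q4 \<alpha> \<alpha> \<gamma>)"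

definition theta_41j :: "nat \<Rightarrow> real \<Rightarrow> real \<Rightarrow> real" where
  "theta_41j j \<alpha> \<gamma> = 2 * arccos (fst (q_itin j \<alpha> \<gamma>))"

end

theory Submission
  imports Defs
begin

text \<open>
  Define \<open>h\<close> by \<open>sin (h/2) = cos (\<gamma>/2) * sin (\<alpha>/2)\<close>. The unit quaternion \<open>Q1 \<alpha> \<alpha> \<gamma>\<close> then
  has scalar part \<open>cos h\<close>, so by de Moivre its \<open>j\<close>-th power is \<open>cos (j h) + sin (j h) / sin h * v\<close>.
  Multiplying by the explicit half-angle form of \<open>Q4 \<alpha> \<alpha> \<gamma>\<close>, the scalar part of the product
  becomes \<open>cos (j h) - 2 (cos (\<gamma>/2) cos (\<alpha>/2))\<^sup>2 cos ((2j+1) h/2) / cos (h/2)\<close>.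
  The hypothesis says \<open>h = \<pi>/(2j+1)\<close>, which kills the second term, so that
  \<open>\<theta> = 2 arccos (cos (j h)) = 2 j h\<close>.
\<close>

definition qnorm2 :: "quat \<Rightarrow> real" where
  "qnorm2 q = (case q of (a, b, c, d) \<Rightarrow> a\<^sup>2 + b\<^sup>2 + c\<^sup>2 + d\<^sup>2)"

lemma qnorm2_qmul: "qnorm2 (qmul p q) = qnorm2 p * qnorm2 q"
  by (cases p; cases q) (simp add: qnorm2_def qmul_def power2_eq_square algebra_simps)

lemma qnorm2_rotq:
  assumes "u1\<^sup>2 + u2\<^sup>2 + u3\<^sup>2 = 1"
  shows "qnorm2 (rotq (u1, u2, u3) \<theta>) = 1"
proof -
  have "qnorm2 (rotq (u1, u2, u3) \<theta>) = (cos (\<theta>/2))\<^sup>2 + (sin (\<theta>/2))\<^sup>2 * (u1\<^sup>2 + u2\<^sup>2 + u3\<^sup>2)"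
    by (simp add: qnorm2_def rotq_def power_mult_distrib algebra_simps)
  then show ?thesis using assms by simp
qed

lemma qnorm2_Q1: "qnorm2 (Q1 \<alpha> \<beta> \<gamma>) = 1"
  by (simp add: Q1_def qnorm2_qmul qnorm2_rotq u_gamma_def z_hat_def)

lemma qpow_de_Moivre:
  assumes "qnorm2 (cos h, v1, v2, v3) = 1" and "sin h \<noteq> 0"
  shows "qpow (cos h, v1, v2, v3) n =
    (cos (real n * h), sin (real n * h) / sin h * v1,
     sin (real n * h) / sin h * v2, sin (real n * h) / sin h * v3)"
proof (induction n)
  case 0
  then show ?case by (simp add: qone_def)
next
  case (Suc n)
  have vnorm: "v1\<^sup>2 + v2\<^sup>2 + v3\<^sup>2 = (sin h)\<^sup>2"
    using assms(1) by (simp add: qnorm2_def sin_squared_eq)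
  have "cos (Suc n * h) =
      cos h * cos (n * h) - sin (n * h) / sin h * (v1\<^sup>2 + v2\<^sup>2 + v3\<^sup>2)"
    unfolding vnorm using assms(2) by (simp add: distrib_right cos_add power2_eq_square)
  moreover have "sin (Suc n * h) / sin h = cos h * (sin (n * h) / sin h) + cos (n * h)"
    using assms(2) by (simp add: distrib_right sin_add field_simps)
  ultimately show ?case
    using Suc.IH by (simp add: qmul_def power2_eq_square algebra_simps add_divide_distrib)
qed

lemma Q4_eq_Q1_shift: "Q4 \<alpha> \<beta> \<gamma> = Q1 (\<alpha> + pi) (\<beta> + pi) \<gamma>"
  by (simp add: Q4_def Q1_def)

lemma Q1_diag:
  "Q1 \<alpha> \<alpha> \<gamma> =
    (1 - 2 * (cos (\<gamma>/2) * sin (\<alpha>/2))\<^sup>2,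
     2 * cos (\<alpha>/2) * sin (\<alpha>/2) * cos (\<gamma>/2) * sin (\<gamma>/2),
     - 2 * (sin (\<alpha>/2))\<^sup>2 * cos (\<gamma>/2) * sin (\<gamma>/2),
     2 * cos (\<alpha>/2) * sin (\<alpha>/2) * (cos (\<gamma>/2))\<^sup>2)"
proof -
  define c s k l
    where "c = cos (\<alpha>/2)" and "s = sin (\<alpha>/2)" and "k = cos (\<gamma>/2)" and "l = sin (\<gamma>/2)"
  have sin_\<gamma>: "sin \<gamma> = 2 * l * k" and cos_\<gamma>: "cos \<gamma> = 2 * k\<^sup>2 - 1"
    using sin_double[of "\<gamma>/2"] cos_double_cos[of "\<gamma>/2"] by (simp_all add: k_def l_def)
  have cc: "c * c = 1 - s * s"
    by (simp add: c_def s_def cos_squared_eq flip: power2_eq_square)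
  show ?thesis
    unfolding Q1_def qmul_def rotq_def u_gamma_def z_hat_def
      c_def[symmetric] s_def[symmetric] k_def[symmetric] l_def[symmetric] sin_\<gamma> cos_\<gamma>
    by (simp add: cc power2_eq_square algebra_simps)
qed

lemma Q4_diag:
  "Q4 \<alpha> \<alpha> \<gamma> =
    (1 - 2 * (cos (\<gamma>/2) * cos (\<alpha>/2))\<^sup>2,
     - 2 * cos (\<alpha>/2) * sin (\<alpha>/2) * cos (\<gamma>/2) * sin (\<gamma>/2),
     - 2 * (cos (\<alpha>/2))\<^sup>2 * cos (\<gamma>/2) * sin (\<gamma>/2),
     - 2 * cos (\<alpha>/2) * sin (\<alpha>/2) * (cos (\<gamma>/2))\<^sup>2)"
proof -
  have "cos ((\<alpha> + pi)/2) = - sin (\<alpha>/2)" and "sin ((\<alpha> + pi)/2) = cos (\<alpha>/2)"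
    by (simp_all add: add_divide_distrib cos_add sin_add)
  then show ?thesis
    by (simp add: Q4_eq_Q1_shift Q1_diag)
qed

lemma fst_q_itin:
  assumes half: "cos (\<gamma>/2) * sin (\<alpha>/2) = sin (h/2)" and "sin h \<noteq> 0"
  shows "fst (q_itin j \<alpha> \<gamma>) =
    cos (real j * h)
    - 2 * (cos (\<gamma>/2) * cos (\<alpha>/2))\<^sup>2 * cos ((2 * real j + 1) * h / 2) / cos (h/2)"
proof -
  define c s k l
    where "c = cos (\<alpha>/2)" and "s = sin (\<alpha>/2)" and "k = cos (\<gamma>/2)" and "l = sin (\<gamma>/2)"
  have Q1: "Q1 \<alpha> \<alpha> \<gamma> = (cos h, 2 * c * s * k * l, - 2 * s\<^sup>2 * k * l, 2 * c * s * k\<^sup>2)"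
    using cos_double_sin[of "h/2"] half by (simp add: Q1_diag c_def s_def k_def l_def)
  have Q4: "Q4 \<alpha> \<alpha> \<gamma> =
      (1 - 2 * (k * c)\<^sup>2, - 2 * c * s * k * l, - 2 * c\<^sup>2 * k * l, - 2 * c * s * k\<^sup>2)"
    by (simp add: Q4_diag c_def s_def k_def l_def)
  have unit: "qnorm2 (cos h, 2 * c * s * k * l, - 2 * s\<^sup>2 * k * l, 2 * c * s * k\<^sup>2) = 1"
    using qnorm2_Q1 Q1 by metis
  have sin_h: "sin h = 2 * (k * s) * cos (h/2)"
    using sin_double[of "h/2"] half by (simp add: k_def s_def)
  have "fst (q_itin j \<alpha> \<gamma>) =
      cos (j * h) * (1 - 2 * (k * c)\<^sup>2) + sin (j * h) / sin h * 4 * c\<^sup>2 * s\<^sup>2 * k ^ 4"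
    unfolding q_itin_def Q1 Q4 qpow_de_Moivre[OF unit assms(2)]
    by (simp add: qmul_def power2_eq_square power4_eq_xxxx algebra_simps)
  also have "\<dots> =
      cos (j * h) - 2 * (k * c)\<^sup>2 * (cos (j * h) * cos (h/2) - sin (j * h) * sin (h/2)) / cos (h/2)"
    using sin_h assms(2) half by (simp add: k_def s_def field_simps power2_eq_square power4_eq_xxxx)
  also have "cos (j * h) * cos (h/2) - sin (j * h) * sin (h/2) = cos ((2 * real j + 1) * h / 2)"
    by (simp add: cos_add[symmetric] algebra_simps add_divide_distrib)
  finally show ?thesis by (simp add: k_def c_def algebra_simps)
qed

theorem proposition1:
  fixes \<alpha> \<gamma> :: real and j :: nat
  assumes "j \<ge> 1"
    and "cos (\<gamma>/2) * sin (\<alpha>/2) = sin (pi / (2 * (2 * real j + 1)))"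
    and "sin (pi / (2 * (2 * real j + 1))) = cos (real j * pi / (2 * real j + 1))"
  shows "theta_41j j \<alpha> \<gamma> = 2 * real j * pi / (2 * real j + 1)"
proof -
  define h where "h = pi / (2 * real j + 1)"
  have "0 < h" and "h < pi"
    using assms(1) by (simp_all add: h_def field_simps)
  then have "sin h \<noteq> 0"
    using sin_gt_zero by fastforce
  moreover have "cos (\<gamma>/2) * sin (\<alpha>/2) = sin (h/2)"
    using assms(2) by (simp add: h_def)
  moreover have "(2 * real j + 1) * h / 2 = pi / 2"
    by (simp add: h_def field_simps)
  ultimately have "fst (q_itin j \<alpha> \<gamma>) = cos (j * h)"
    using fst_q_itin by simp
  moreover have "arccos (cos (j * h)) = j * h"
    using \<open>0 < h\<close> by (intro arccos_cos) (simp_all add: h_def field_simps)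
  ultimately show ?thesis
    by (simp add: theta_41j_def h_def)
qed

end
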